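(* Let $\Gamma_0<\Gamma$ be a finite index inclusion of countable groups and let $\sigma_n:\Gamma_0\rightarrow\mathrm{Sym}(X_n)$ be a sofic approximation of $\Gamma_0$. If the induced sofic approximation $\mathrm{Ind}_{\Gamma_0}^{\Gamma}(\sigma_n):\Gamma\to\mathrm{Sym}(\Gamma/\Gamma_0\times X_n)$ of $\Gamma$ satisfies property $(\diamond)$, then $(\sigma_n)$ satisfies property $(\diamond)$.
   Context: For finite sets $X,Y$ and maps $\alpha,\beta:X\to Y$, $\mathrm{d}_{\mathrm{H}}(\alpha,\beta)=|X|^{-1}|\{x\in X\mid\alpha(x)\neq\beta(x)\}|$. A sofic approximation of a countable group $G$ is a sequence of maps $\sigma_n:G\to\mathrm{Sym}(X_n)$, $X_n$ finite, with $\mathrm{d}_{\mathrm{H}}(\sigma_n(g)\sigma_n(h),\sigma_n(gh))\to0$ for all $g,h\in G$ and $\mathrm{d}_{\mathrm{H}}(\sigma_n(g),\mathrm{Id}_{X_n})\to1$ for all $g\neq e$. A sofic approximation $\sigma_n:G\to\mathrm{Sym}(X_n)$ satisfies $(\diamond)$ if there exist a sofic approximation $\tau_n:G\to\mathrm{Sym}(Y_n)$ and maps $\theta_n:X_n\to Y_n$ such that (a) each $\tau_n$ is a homomorphism, (b) $\mathrm{d}_{\mathrm{H}}(\theta_n\circ\sigma_n(g),\tau_n(g)\circ\theta_n)\to0$ for every $g\in G$, and (c) $\mathrm{d}_{\mathrm{H}}(\theta_n\circ\sigma_n(g),\theta_n)\to1$ for every $g\in G\setminus\{e\}$. Induction: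 choose $s:\Gamma/\Gamma_0\to\Gamma$ with $s(e\Gamma_0)=e$ and $s(g\Gamma_0)\in g\Gamma_0$, let $c(g,h\Gamma_0)=s(gh\Gamma_0)^{-1}gs(h\Gamma_0)\in\Gamma_0$, and define $\mathrm{Ind}_{\Gamma_0}^{\Gamma}(\sigma_n)(g)(h\Gamma_0,x)=(gh\Gamma_0,\sigma_n(c(g,h\Gamma_0))x)$ for $g\in\Gamma$, $h\Gamma_0\in\Gamma/\Gamma_0$, $x\in X_n$; this is a sofic approximation of $\Gamma$. *)

theory Defs
  imports Complex_Main "HOL-Algebra.Left_Coset" "HOL-Combinatorics.Permutations" "HOL-Library.Countable_Set"
begin

definition hamming :: "'x set \<Rightarrow> ('x \<Rightarrow> 'y) \<Rightarrow> ('x \<Rightarrow> 'y) \<Rightarrow> real" where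
  "hamming X a b = real (card {x \<in> X. a x \<noteq> b x}) / real (card X)"

text \<open>Sofic approximation of the group G: sigma n g is a permutation of the finite set X n
  (elements of Sym(X n) are represented as maps permuting X n and fixing everything else).\<close>
definition sofic_approx ::
  "('g, 'm) monoid_scheme \<Rightarrow> (nat \<Rightarrow> 'x set) \<Rightarrow> (nat \<Rightarrow> 'g \<Rightarrow> 'x \<Rightarrow> 'x) \<Rightarrow> bool" where
  "sofic_approx G X \<sigma> \<longleftrightarrow>
     (\<forall>n. finite (X n)) \<and>
     (\<forall>n. \<forall>g\<in>carrier G. \<sigma> n g permutes X n) \<and>
     (\<forall>g\<in>carrier G. \<forall>h\<in>carrier G.
        (\<lambda>n. hamming (X n) (\<sigma> n g \<circ> \<sigma> n h) (\<sigma> n (g \<otimes>\<^bsub>G\<^esub> h))) \<longlonglongrightarrow> 0) \<and>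
     (\<forall>g\<in>carrier G. g \<noteq> \<one>\<^bsub>G\<^esub> \<longrightarrow> (\<lambda>n. hamming (X n) (\<sigma> n g) id) \<longlonglongrightarrow> 1)"

text \<open>Property (diamond). The finite sets Y n are taken inside nat (every finite set is in
  bijection with a finite set of naturals, so this loses no generality).\<close>
definition diamond ::
  "('g, 'm) monoid_scheme \<Rightarrow> (nat \<Rightarrow> 'x set) \<Rightarrow> (nat \<Rightarrow> 'g \<Rightarrow> 'x \<Rightarrow> 'x) \<Rightarrow> bool" where
  "diamond G X \<sigma> \<longleftrightarrow>
     (\<exists>(Y :: nat \<Rightarrow> nat set) (\<tau> :: nat \<Rightarrow> 'g \<Rightarrow> nat \<Rightarrow> nat) (\<theta> :: nat \<Rightarrow> 'x \<Rightarrow> nat).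
        sofic_approx G Y \<tau> \<and>
        (\<forall>n. \<forall>g\<in>carrier G. \<forall>h\<in>carrier G. \<tau> n (g \<otimes>\<^bsub>G\<^esub> h) = \<tau> n g \<circ> \<tau> n h) \<and>
        (\<forall>n. \<theta> n ` X n \<subseteq> Y n) \<and>
        (\<forall>g\<in>carrier G.
           (\<lambda>n. hamming (X n) (\<theta> n \<circ> \<sigma> n g) (\<tau> n g \<circ> \<theta> n)) \<longlonglongrightarrow> 0) \<and>
        (\<forall>g\<in>carrier G. g \<noteq> \<one>\<^bsub>G\<^esub> \<longrightarrow>
           (\<lambda>n. hamming (X n) (\<theta> n \<circ> \<sigma> n g) (\<theta> n)) \<longlonglongrightarrow> 1))"

definition cocycle ::
  "('g, 'm) monoid_scheme \<Rightarrow> ('g set \<Rightarrow> 'g) \<Rightarrow> 'g \<Rightarrow> 'g set \<Rightarrow> 'g" where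
  "cocycle G s g C = inv\<^bsub>G\<^esub> (s (g <#\<^bsub>G\<^esub> C)) \<otimes>\<^bsub>G\<^esub> g \<otimes>\<^bsub>G\<^esub> s C"

definition induced ::
  "('g, 'm) monoid_scheme \<Rightarrow> 'g set \<Rightarrow> ('g set \<Rightarrow> 'g) \<Rightarrow> (nat \<Rightarrow> 'x set) \<Rightarrow>
   (nat \<Rightarrow> 'g \<Rightarrow> 'x \<Rightarrow> 'x) \<Rightarrow> nat \<Rightarrow> 'g \<Rightarrow> ('g set \<times> 'x) \<Rightarrow> ('g set \<times> 'x)" where
  "induced G H s X \<sigma> n g p =
     (if p \<in> (lcosets\<^bsub>G\<^esub> H) \<times> X n
      then (g <#\<^bsub>G\<^esub> fst p, \<sigma> n (cocycle G s g (fst p)) (snd p))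
      else p)"

end

theory Submission
  imports Defs
begin

text \<open>For \<open>h \<in> \<Gamma>\<^sub>0\<close> the induced permutation maps the slice \<open>{\<Gamma>\<^sub>0} \<times> X\<^sub>n\<close> to itself and acts
  there as \<open>\<sigma>\<^sub>n(h)\<close>, because \<open>c(h, \<Gamma>\<^sub>0) = s(\<Gamma>\<^sub>0)\<^sup>-\<^sup>1 h s(\<Gamma>\<^sub>0) = h\<close>. Hence restricting the maps
  \<open>\<theta>\<^sub>n\<close> witnessing \<open>(\<diamond>)\<close> for the induced approximation to this slice, and the homomorphisms
  \<open>\<tau>\<^sub>n\<close> to \<open>\<Gamma>\<^sub>0\<close>, witnesses \<open>(\<diamond>)\<close> for \<open>\<sigma>\<^sub>n\<close>. The slice is a \<open>1/[\<Gamma> : \<Gamma>\<^sub>0]\<close> fraction of the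
  whole space, so Hamming distances on it are at most \<open>[\<Gamma> : \<Gamma>\<^sub>0]\<close> times those on the whole
  space; this transfers convergence to 0 directly, and convergence to 1 by applying the same
  bound to the proportion of agreement.\<close>

lemma hamming_nonneg: "0 \<le> hamming X a b"
  by (simp add: hamming_def)

lemma hamming_cong:
  assumes "\<And>x. x \<in> X \<Longrightarrow> a x = a' x" and "\<And>x. x \<in> X \<Longrightarrow> b x = b' x"
  shows "hamming X a b = hamming X a' b'"
  unfolding hamming_def using assms by (metis (mono_tags, lifting) Collect_cong)

lemma one_minus_hamming:
  assumes "finite X" and "X \<noteq> {}"
  shows "1 - hamming X a b = hamming X (\<lambda>x. a x = b x) (\<lambda>_. False)"
proof -
  have "card {x \<in> X. a x \<noteq> b x} + card {x \<in> X. a x = b x} = card X"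
    using assms(1) by (subst card_Un_disjoint[symmetric]) (auto intro: arg_cong[where f = card])
  moreover have "card X > 0" using assms by (simp add: card_gt_0_iff)
  ultimately show ?thesis by (simp add: hamming_def field_simps)
qed

lemma card_slice_le:
  assumes "finite L" and "finite X" and "c \<in> L"
  shows "card {x \<in> X. P (c, x)} \<le> card {p \<in> L \<times> X. P p}"
proof -
  have "card {x \<in> X. P (c, x)} = card (Pair c ` {x \<in> X. P (c, x)})"
    by (simp add: card_image inj_on_def)
  also have "\<dots> \<le> card {p \<in> L \<times> X. P p}"
    using assms by (intro card_mono) auto
  finally show ?thesis .
qed

lemma hamming_slice_le:
  assumes "finite L" and "finite X" and "c \<in> L"
  shows "hamming X (\<lambda>x. a (c, x)) (\<lambda>x. b (c, x)) \<le> real (card L) * hamming (L \<times> X) a b"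
proof (cases "X = {}")
  case False
  have "card L > 0" "card X > 0" using assms False by (auto simp: card_gt_0_iff)
  with card_slice_le[OF assms, of "\<lambda>p. a p \<noteq> b p"] show ?thesis
    by (simp add: hamming_def card_cartesian_product field_simps)
qed (simp add: hamming_def)

lemma hamming_slice_tendsto_zero:
  assumes "finite L" and "c \<in> L" and "\<And>n. finite (X n)"
    and "(\<lambda>n. hamming (L \<times> X n) (a n) (b n)) \<longlonglongrightarrow> 0"
  shows "(\<lambda>n. hamming (X n) (\<lambda>x. a n (c, x)) (\<lambda>x. b n (c, x))) \<longlonglongrightarrow> 0"
proof (rule real_tendsto_sandwich[OF _ _ tendsto_const])
  show "\<forall>\<^sub>F n in sequentially. 0 \<le> hamming (X n) (\<lambda>x. a n (c, x)) (\<lambda>x. b n (c, x))"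
    by (simp add: hamming_nonneg)
  show "\<forall>\<^sub>F n in sequentially. hamming (X n) (\<lambda>x. a n (c, x)) (\<lambda>x. b n (c, x))
      \<le> real (card L) * hamming (L \<times> X n) (a n) (b n)"
    by (intro always_eventually allI hamming_slice_le assms)
  show "(\<lambda>n. real (card L) * hamming (L \<times> X n) (a n) (b n)) \<longlonglongrightarrow> 0"
    using tendsto_mult_right_zero[OF assms(4)] .
qed

lemma hamming_slice_tendsto_one:
  assumes "finite L" and "c \<in> L" and "\<And>n. finite (X n)"
    and "(\<lambda>n. hamming (L \<times> X n) (a n) (b n)) \<longlonglongrightarrow> 1"
  shows "(\<lambda>n. hamming (X n) (\<lambda>x. a n (c, x)) (\<lambda>x. b n (c, x))) \<longlonglongrightarrow> 1"
proof -
  have "\<forall>\<^sub>F n in sequentially. hamming (L \<times> X n) (a n) (b n) > 0"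
    using assms(4) by (rule order_tendstoD) simp
  then have nonempty: "\<forall>\<^sub>F n in sequentially. X n \<noteq> {}"
    by eventually_elim (auto simp: hamming_def)
  have agree: "\<forall>\<^sub>F n in sequentially. 1 - hamming (L \<times> X n) (a n) (b n)
      = hamming (L \<times> X n) (\<lambda>p. a n p = b n p) (\<lambda>_. False)"
    using nonempty by eventually_elim (use assms in \<open>auto intro: one_minus_hamming\<close>)
  have agree_slice: "\<forall>\<^sub>F n in sequentially. 1 - hamming (X n) (\<lambda>x. a n (c, x)) (\<lambda>x. b n (c, x))
      = hamming (X n) (\<lambda>x. a n (c, x) = b n (c, x)) (\<lambda>_. False)"
    using nonempty by eventually_elim (use assms in \<open>auto intro: one_minus_hamming\<close>)
  have "(\<lambda>n. 1 - hamming (L \<times> X n) (a n) (b n)) \<longlonglongrightarrow> 0"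
    using tendsto_diff[OF tendsto_const assms(4), of 1] by simp
  then have "(\<lambda>n. hamming (L \<times> X n) (\<lambda>p. a n p = b n p) (\<lambda>_. False)) \<longlonglongrightarrow> 0"
    using agree by (rule Lim_transform_eventually)
  then have "(\<lambda>n. hamming (X n) (\<lambda>x. a n (c, x) = b n (c, x)) (\<lambda>_. False)) \<longlonglongrightarrow> 0"
    by (rule hamming_slice_tendsto_zero[where X = X, OF assms(1-3)])
  then have "(\<lambda>n. 1 - hamming (X n) (\<lambda>x. a n (c, x)) (\<lambda>x. b n (c, x))) \<longlonglongrightarrow> 0"
    using agree_slice by (rule Lim_transform_eventually[OF _ eventually_mono]) auto
  from tendsto_diff[OF tendsto_const this, of 1] show ?thesis by simp
qed

lemma sofic_approx_restrict:
  assumes "sofic_approx G Y \<tau>" and "H \<subseteq> carrier G"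
  shows "sofic_approx (G\<lparr>carrier := H\<rparr>) Y \<tau>"
  using assms unfolding sofic_approx_def by (auto simp: subset_iff)

lemma (in subgroup) subgroup_in_lcosets:
  assumes "group G"
  shows "H \<in> lcosets\<^bsub>G\<^esub> H"
  using group.coset_join3[OF assms one_closed[THEN mem_carrier] subgroup_axioms one_closed]
  by (auto simp: LCOSETS_def)

lemma induced_on_subgroup_coset:
  assumes "group G" and "subgroup H G" and "s H = \<one>\<^bsub>G\<^esub>" and "h \<in> H" and "x \<in> X n"
  shows "induced G H s X \<sigma> n h (H, x) = (H, \<sigma> n h x)"
proof -
  interpret group G by fact
  have "h <#\<^bsub>G\<^esub> H = H"
    using assms(2,4) by (intro coset_join3) (auto dest: subgroup.mem_carrier)
  moreover have "cocycle G s h H = h"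
    using assms(2-4) calculation by (simp add: cocycle_def subgroup.mem_carrier)
  ultimately show ?thesis
    using assms subgroup.subgroup_in_lcosets[OF assms(2,1)] by (simp add: induced_def)
qed

theorem lemma4p4:
  fixes G :: "('g, 'm) monoid_scheme"
    and H :: "'g set"
    and X :: "nat \<Rightarrow> 'x set"
    and \<sigma> :: "nat \<Rightarrow> 'g \<Rightarrow> 'x \<Rightarrow> 'x"
    and s :: "'g set \<Rightarrow> 'g"
  assumes "group G"
    and "countable (carrier G)"
    and "subgroup H G"
    and "finite (lcosets\<^bsub>G\<^esub> H)"
    and "sofic_approx (G\<lparr>carrier := H\<rparr>) X \<sigma>"
    and "s H = \<one>\<^bsub>G\<^esub>"
    and "\<forall>C\<in>lcosets\<^bsub>G\<^esub> H. s C \<in> C"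
    and "diamond G (\<lambda>n. (lcosets\<^bsub>G\<^esub> H) \<times> X n) (induced G H s X \<sigma>)"
  shows "diamond (G\<lparr>carrier := H\<rparr>) X \<sigma>"
proof -
  let ?L = "lcosets\<^bsub>G\<^esub> H" and ?ind = "induced G H s X \<sigma>"
  have H_coset: "H \<in> ?L" using subgroup.subgroup_in_lcosets[OF assms(3,1)] .
  have finite_X: "finite (X n)" for n using assms(5) by (simp add: sofic_approx_def)
  have H_sub: "H \<subseteq> carrier G" using assms(3) by (rule subgroup.subset)
  obtain Y :: "nat \<Rightarrow> nat set" and \<tau> and \<theta> where sofic: "sofic_approx G Y \<tau>"
    and hom: "\<forall>n. \<forall>g\<in>carrier G. \<forall>h\<in>carrier G. \<tau> n (g \<otimes>\<^bsub>G\<^esub> h) = \<tau> n g \<circ> \<tau> n h"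
    and into: "\<forall>n. \<theta> n ` (?L \<times> X n) \<subseteq> Y n"
    and equiv: "\<forall>g\<in>carrier G. (\<lambda>n. hamming (?L \<times> X n) (\<theta> n \<circ> ?ind n g) (\<tau> n g \<circ> \<theta> n)) \<longlonglongrightarrow> 0"
    and free: "\<forall>g\<in>carrier G. g \<noteq> \<one>\<^bsub>G\<^esub> \<longrightarrow>
      (\<lambda>n. hamming (?L \<times> X n) (\<theta> n \<circ> ?ind n g) (\<theta> n)) \<longlonglongrightarrow> 1"
    using assms(8) unfolding diamond_def by blast
  define \<theta>' where "\<theta>' n x = \<theta> n (H, x)" for n x
  have slice: "hamming (X n) (\<theta>' n \<circ> \<sigma> n h) (f \<circ> \<theta>' n)
      = hamming (X n) (\<lambda>x. (\<theta> n \<circ> ?ind n h) (H, x)) (\<lambda>x. (f \<circ> \<theta> n) (H, x))"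
    if "h \<in> H" for n h f
    using induced_on_subgroup_coset[OF assms(1,3), where s = s and X = X, OF assms(6) that]
    by (intro hamming_cong) (simp_all add: \<theta>'_def)
  have "(\<lambda>n. hamming (X n) (\<theta>' n \<circ> \<sigma> n g) (\<tau> n g \<circ> \<theta>' n)) \<longlonglongrightarrow> 0" if "g \<in> H" for g
    unfolding slice[OF that] using equiv that H_sub
    by (intro hamming_slice_tendsto_zero[OF assms(4) H_coset finite_X]) blast
  moreover have "(\<lambda>n. hamming (X n) (\<theta>' n \<circ> \<sigma> n g) (\<theta>' n)) \<longlonglongrightarrow> 1"
    if "g \<in> H" and "g \<noteq> \<one>\<^bsub>G\<^esub>" for g
    unfolding slice[OF that(1), of _ id, unfolded id_comp] using free that H_sub
    by (intro hamming_slice_tendsto_one[OF assms(4) H_coset finite_X]) blast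
  moreover have "\<theta>' n ` X n \<subseteq> Y n" for n using into H_coset by (auto simp: \<theta>'_def)
  ultimately show ?thesis
    unfolding diamond_def using sofic_approx_restrict[OF sofic H_sub] hom H_sub
    by (intro exI[of _ Y] exI[of _ \<tau>] exI[of _ \<theta>']) (auto simp: subset_iff)
qed

end
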